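(* Let $G$ be a (not necessarily connected) graph on $n\ge1$ vertices with adjacency matrix $A$, and let $m\ge2$. Then there exist $\mu\in\mathbb{R}$, $f\in\mathbb{R}^m$, $g\in\mathbb{R}^n$ such that $(\alpha,\mu,f,g)$ with $\alpha=-m$ solves the system \[ (J_m+\alpha I)f=\tfrac{\mu}{2}\mathbf 1,\quad (A-J_n-\alpha I)g=-\tfrac{\mu}{2}\mathbf 1,\quad \langle f,f\rangle+\langle g,g\rangle=1,\quad \langle\mathbf 1,f\rangle+\langle\mathbf 1,g\rangle=0 \] if and only if $m$ is an eigenvalue of $J_n-A$.
   Context: $J_k$ denotes the $k\times k$ all-ones matrix, $\mathbf 1$ the all-ones vector of the appropriate size, $I$ the identity matrix. *)

theory Defs
  imports "HOL-Analysis.Analysis"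
begin

definition adj_matrix :: "('n::finite \<Rightarrow> 'n \<Rightarrow> bool) \<Rightarrow> real^'n^'n" where
  "adj_matrix E = (\<chi> i j. if E i j then 1 else 0)"

definition ones_mat :: "real^'k^'k" where
  "ones_mat = (\<chi> i j. 1)"

definition ones_vec :: "real^'k" where
  "ones_vec = (\<chi> i. 1)"

definition is_eigenvalue :: "real^'k^'k \<Rightarrow> real \<Rightarrow> bool" where
  "is_eigenvalue M lam \<longleftrightarrow> (\<exists>v. v \<noteq> 0 \<and> M *v v = lam *\<^sub>R v)"

end

theory Submission
  imports Defs
begin

text \<open>With \<open>\<alpha> = -m\<close> the first equation reads \<open>(\<one>\<bullet>f) \<one> - m f = (\<mu>/2) \<one>\<close>; pairing it with
\<open>\<one>\<close> kills the left-hand side, so \<open>\<mu> = 0\<close> and \<open>f\<close> is constant. The second equation then says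
exactly that \<open>g\<close> is an eigenvector of \<open>J\<^sub>n - A\<close> for \<open>m\<close>, and the two scalar constraints fix the
constant value of \<open>f\<close> and the scale of \<open>g\<close>, which is possible precisely when \<open>g \<noteq> 0\<close>.
Nothing about \<open>A\<close> beyond being square is used, nor is \<open>m \<ge> 2\<close>.\<close>

lemma inner_ones_vec: "ones_vec \<bullet> (f::real^'k) = (\<Sum>i\<in>UNIV. f $ i)"
  by (simp add: inner_vec_def ones_vec_def)

lemma inner_ones_vec_self [simp]: "ones_vec \<bullet> (ones_vec::real^'k) = real CARD('k)"
  by (simp add: inner_vec_def ones_vec_def)

lemma ones_mat_mult_vec: "ones_mat *v (f::real^'k) = (ones_vec \<bullet> f) *\<^sub>R ones_vec"
  unfolding inner_ones_vec by (simp add: vec_eq_iff matrix_vector_mult_def ones_mat_def ones_vec_def)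

lemma ones_mat_minus_card_mult_eq_const_iff:
  fixes f :: "real^'k"
  shows "(ones_mat - real CARD('k) *\<^sub>R mat 1) *v f = c *\<^sub>R ones_vec
    \<longleftrightarrow> c = 0 \<and> (\<exists>a. f = a *\<^sub>R ones_vec)"
proof -
  let ?k = "real CARD('k)"
  have lhs: "(ones_mat - ?k *\<^sub>R mat 1) *v f = (ones_vec \<bullet> f) *\<^sub>R ones_vec - ?k *\<^sub>R f"
    by (simp add: matrix_vector_mult_diff_rdistrib ones_mat_mult_vec
        scaleR_matrix_vector_assoc[symmetric])
  show ?thesis
  proof
    assume eq: "(ones_mat - ?k *\<^sub>R mat 1) *v f = c *\<^sub>R ones_vec"
    have "ones_vec \<bullet> ((ones_vec \<bullet> f) *\<^sub>R ones_vec - ?k *\<^sub>R f)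
        = ones_vec \<bullet> (c *\<^sub>R (ones_vec::real^'k))"
      using eq lhs by simp
    then have "c = 0"
      by (simp add: inner_diff_right)
    with eq lhs have "f = ((ones_vec \<bullet> f) / ?k) *\<^sub>R ones_vec"
      by (simp add: eq_vector_fraction_iff)
    with \<open>c = 0\<close> show "c = 0 \<and> (\<exists>a. f = a *\<^sub>R ones_vec)"
      by blast
  qed (auto simp: lhs)
qed

lemma is_eigenvalue_iff_normalized_eigenvector:
  fixes M :: "real^'k^'k"
  assumes "c > 0"
  shows "is_eigenvalue M \<theta>
    \<longleftrightarrow> (\<exists>v. M *v v = \<theta> *\<^sub>R v \<and> (ones_vec \<bullet> v)\<^sup>2 / c + v \<bullet> v = 1)"
proof
  assume "is_eigenvalue M \<theta>"
  then obtain v where "v \<noteq> 0" and eig: "M *v v = \<theta> *\<^sub>R v"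
    by (auto simp: is_eigenvalue_def)
  define K where "K = (ones_vec \<bullet> v)\<^sup>2 / c + v \<bullet> v"
  have "K > 0"
    using \<open>v \<noteq> 0\<close> \<open>c > 0\<close> by (simp add: K_def add_nonneg_pos)
  define t where "t = 1 / sqrt K"
  have "t\<^sup>2 * K = 1"
    using \<open>K > 0\<close> by (simp add: t_def power_divide)
  have "M *v (t *\<^sub>R v) = \<theta> *\<^sub>R (t *\<^sub>R v)"
    by (simp add: matrix_vector_mult_scaleR eig)
  moreover have "(ones_vec \<bullet> (t *\<^sub>R v))\<^sup>2 / c + (t *\<^sub>R v) \<bullet> (t *\<^sub>R v) = t\<^sup>2 * K"
    by (simp add: K_def power_mult_distrib algebra_simps power2_eq_square)
  ultimately show "\<exists>v. M *v v = \<theta> *\<^sub>R v \<and> (ones_vec \<bullet> v)\<^sup>2 / c + v \<bullet> v = 1"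
    using \<open>t\<^sup>2 * K = 1\<close> by metis
next
  assume "\<exists>v. M *v v = \<theta> *\<^sub>R v \<and> (ones_vec \<bullet> v)\<^sup>2 / c + v \<bullet> v = 1"
  then obtain v where "M *v v = \<theta> *\<^sub>R v" and "(ones_vec \<bullet> v)\<^sup>2 / c + v \<bullet> v = 1"
    by blast
  moreover from this(2) have "v \<noteq> 0"
    by auto
  ultimately show "is_eigenvalue M \<theta>"
    unfolding is_eigenvalue_def by blast
qed

theorem ones_system_solvable_iff_eigenvalue:
  fixes M :: "real^'n^'n"
  shows "(\<exists>(\<mu>::real) (f::real^'m) (g::real^'n).
      (ones_mat - real CARD('m) *\<^sub>R mat 1) *v f = (\<mu> / 2) *\<^sub>R ones_vec \<and>
      (M - ones_mat + real CARD('m) *\<^sub>R mat 1) *v g = - (\<mu> / 2) *\<^sub>R ones_vec \<and>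
      f \<bullet> f + g \<bullet> g = 1 \<and> ones_vec \<bullet> f + ones_vec \<bullet> g = 0)
    \<longleftrightarrow> is_eigenvalue (ones_mat - M) (real CARD('m))" (is "?system \<longleftrightarrow> _")
proof -
  let ?m = "real CARD('m)"
  have second_eq_iff:
    "(M - ones_mat + ?m *\<^sub>R mat 1) *v g = 0 \<longleftrightarrow> (ones_mat - M) *v g = ?m *\<^sub>R g"
    for g :: "real^'n"
    by (auto simp: matrix_vector_mult_diff_rdistrib matrix_vector_mult_add_rdistrib
        scaleR_matrix_vector_assoc[symmetric] algebra_simps)
  have "?system \<longleftrightarrow> (\<exists>a (g::real^'n). (ones_mat - M) *v g = ?m *\<^sub>R g \<and>
      a\<^sup>2 * ?m + g \<bullet> g = 1 \<and> a * ?m + ones_vec \<bullet> g = 0)" (is "_ \<longleftrightarrow> ?reduced")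
  proof
    assume ?system
    then obtain \<mu> and f :: "real^'m" and g
      where "(ones_mat - ?m *\<^sub>R mat 1) *v f = (\<mu> / 2) *\<^sub>R ones_vec"
      and "(M - ones_mat + ?m *\<^sub>R mat 1) *v g = - (\<mu> / 2) *\<^sub>R ones_vec"
      and "f \<bullet> f + g \<bullet> g = 1" and "ones_vec \<bullet> f + ones_vec \<bullet> g = 0"
      by blast
    then show ?reduced
      by (fastforce simp: ones_mat_minus_card_mult_eq_const_iff second_eq_iff
          power2_eq_square mult.assoc)
  next
    assume ?reduced
    then obtain a g where "(ones_mat - M) *v g = ?m *\<^sub>R g"
      and "a\<^sup>2 * ?m + g \<bullet> g = 1" and "a * ?m + ones_vec \<bullet> g = 0"
      by blast
    moreover have "(ones_mat - ?m *\<^sub>R mat 1) *v (a *\<^sub>R ones_vec :: real^'m) = 0"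
      using ones_mat_minus_card_mult_eq_const_iff[of "a *\<^sub>R ones_vec" 0] by auto
    ultimately show ?system
      by (intro exI[of _ 0] exI[of _ "a *\<^sub>R ones_vec"] exI[of _ g])
        (simp add: second_eq_iff power2_eq_square mult.assoc)
  qed
  also have "\<dots> \<longleftrightarrow>
      (\<exists>g. (ones_mat - M) *v g = ?m *\<^sub>R g \<and> (ones_vec \<bullet> g)\<^sup>2 / ?m + g \<bullet> g = 1)"
  proof -
    have "a * ?m + ones_vec \<bullet> g = 0 \<longleftrightarrow> a = - (ones_vec \<bullet> g) / ?m" for a and g :: "real^'n"
      by (auto simp: field_simps)
    then show ?thesis
      by (auto simp: power2_eq_square)
  qed
  also have "\<dots> \<longleftrightarrow> is_eigenvalue (ones_mat - M) ?m"
    by (rule is_eigenvalue_iff_normalized_eigenvector[symmetric]) simp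
  finally show ?thesis .
qed

theorem lemma3p3:
  fixes E :: "'n::finite \<Rightarrow> 'n \<Rightarrow> bool"
  assumes sym: "\<And>i j. E i j \<longleftrightarrow> E j i"
    and irrefl: "\<And>i. \<not> E i i"
    and m2: "CARD('m::finite) \<ge> 2"
  shows "(\<exists>(\<mu>::real) (f::real^'m) (g::real^'n).
            let \<alpha> = - real CARD('m) in
            (ones_mat + \<alpha> *\<^sub>R mat 1) *v f = (\<mu> / 2) *\<^sub>R ones_vec \<and>
            (adj_matrix E - ones_mat - \<alpha> *\<^sub>R mat 1) *v g = - (\<mu> / 2) *\<^sub>R ones_vec \<and>
            f \<bullet> f + g \<bullet> g = 1 \<and>
            ones_vec \<bullet> f + ones_vec \<bullet> g = 0)
         \<longleftrightarrow> is_eigenvalue (ones_mat - adj_matrix E) (real CARD('m))"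
  using ones_system_solvable_iff_eigenvalue[of "adj_matrix E"] by (simp add: Let_def)

end
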